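(* Consider the thresholding bandit setting and algorithm LSA with parameter $\alpha$ in the context, with $0<\alpha\le 8$ and $T\ge\max\{40/\alpha+1,40\}K$. Let $f(x)=\alpha x+\ln\alpha+0.5-\alpha$. For every arm $i\in B$ and every $\varkappa\ge\frac{\alpha-\ln\alpha-0.5}{\alpha}$ (with $\Pr(\mathcal{F}_{\Lambda-f(\varkappa)})>0$), \[ \Pr\big(T_i(T)<\lambda_i/20\,\big|\,\mathcal{F}_{\Lambda-f(\varkappa)}\big)\le\frac{\Pr(\overline{\mathcal{M}_{i,\varkappa}})}{\Pr(\mathcal{F}_{\Lambda-f(\varkappa)})}. \]
   Context: $K\ge2$ arms; arm $i$ has reward distribution $\mathcal{D}_i$ on $[0,1]$ with mean $\theta_i$; $\theta\in(0,1)$; $\Delta_i=|\theta_i-\theta|$ (convention $\ln(1/0)=+\infty$). For each $i$, rewards $X_{i,1},X_{i,2},\dots$ from successive pulls of arm $i$ are i.i.d. from $\mathcal{D}_i$, independent across arms; $\hat\Delta_{i,t}=|\frac1t\sum_{s\le t}X_{i,s}-\theta|$. $T_i(t)$ = number of pulls of arm $i$ in the first $t$ rounds; $\hat\Delta_i(t)=\hat\Delta_{i,T_i(t)}$. LSA (parameter $\alpha>0$, budget $T$): pull each arm once in rounds $1..K$; in round $t=K+1,\dots,T$ pull an arm minimizing $\alpha T_i(t-1)(\hat\Delta_i(t-1))^2+0.5\ln T_i(t-1)$. $\xi_i(t)=\alpha T_i(t)(\hat\Delta_i(t))^2+0.5\ln T_i(t)$ for $t\ge K$; $\mathcal{F}_C=\{\exists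 T',K\le T'\le T:\xi_i(T')>C\ \forall i\}$. $M=\max\{40/\alpha+1,40\}$; $g_i(x)=e^{2x}$ if $x\le\ln\Delta_i^{-1}$, $g_i(x)=\frac{x-\ln\Delta_i^{-1}+\alpha}{\alpha\Delta_i^2}$ otherwise; $\Lambda$ is the unique $x\ge0$ with $\sum_ig_i(x)=T/M$; $\lambda_i=g_i(\Lambda)$; $B=\{i:\ln\Delta_i^{-1}<\Lambda\}$. $\mathcal{M}_{i,\varkappa}$ is the event that for all integers $1\le t\le\lambda_i$, $|\hat\Delta_{i,t}-\Delta_i|\le\sqrt{(\lambda_i\Delta_i^2/5-\varkappa/2+\frac1{4\alpha}\ln\frac{\lambda_i}{t})/t}$; $\overline{\mathcal{M}_{i,\varkappa}}$ is its complement. *)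

theory Defs
  imports "HOL-Probability.Probability"
begin

text \<open>Arms are indexed 0,...,K-1; rewards of arm i are X i 1, X i 2, ... .
  Rounds are 1,...,T; lsa_counts ... t i is T_i(t), the number of pulls of arm i
  in the first t rounds.\<close>

definition arm_gap :: "(nat \<Rightarrow> real measure) \<Rightarrow> real \<Rightarrow> nat \<Rightarrow> real" where
  "arm_gap D \<theta> i = \<bar>(\<integral>x. x \<partial>(D i)) - \<theta>\<bar>"

definition emp_gap :: "(nat \<Rightarrow> nat \<Rightarrow> 'a \<Rightarrow> real) \<Rightarrow> real \<Rightarrow> nat \<Rightarrow> nat \<Rightarrow> 'a \<Rightarrow> real" where
  "emp_gap X \<theta> i n \<omega> = \<bar>(\<Sum>s=1..n. X i s \<omega>) / real n - \<theta>\<bar>"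

definition lsa_idx :: "(nat \<Rightarrow> nat \<Rightarrow> 'a \<Rightarrow> real) \<Rightarrow> real \<Rightarrow> real \<Rightarrow> nat \<Rightarrow> nat \<Rightarrow> 'a \<Rightarrow> real" where
  "lsa_idx X \<theta> \<alpha> i n \<omega> = \<alpha> * real n * (emp_gap X \<theta> i n \<omega>)\<^sup>2 + ln (real n) / 2"

text \<open>tb is the tie-breaking rule: given the round, the current counts and the set of
  minimisers of the LSA index, it returns the arm to pull.\<close>
fun lsa_counts :: "(nat \<Rightarrow> nat \<Rightarrow> 'a \<Rightarrow> real) \<Rightarrow> real \<Rightarrow> real \<Rightarrow> nat
    \<Rightarrow> (nat \<Rightarrow> (nat \<Rightarrow> nat) \<Rightarrow> nat set \<Rightarrow> nat) \<Rightarrow> 'a \<Rightarrow> nat \<Rightarrow> nat \<Rightarrow> nat" where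
  "lsa_counts X \<theta> \<alpha> K tb \<omega> 0 = (\<lambda>i. 0)"
| "lsa_counts X \<theta> \<alpha> K tb \<omega> (Suc t) =
     (let c = lsa_counts X \<theta> \<alpha> K tb \<omega> t in
      if t < K then c(t := Suc (c t))
      else (let S = {j. j < K \<and> (\<forall>k<K. lsa_idx X \<theta> \<alpha> j (c j) \<omega> \<le> lsa_idx X \<theta> \<alpha> k (c k) \<omega>)};
                a = tb (Suc t) c S
            in c(a := Suc (c a))))"

definition xi :: "(nat \<Rightarrow> nat \<Rightarrow> 'a \<Rightarrow> real) \<Rightarrow> real \<Rightarrow> real \<Rightarrow> nat
    \<Rightarrow> (nat \<Rightarrow> (nat \<Rightarrow> nat) \<Rightarrow> nat set \<Rightarrow> nat) \<Rightarrow> 'a \<Rightarrow> nat \<Rightarrow> nat \<Rightarrow> real" where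
  "xi X \<theta> \<alpha> K tb \<omega> t i = lsa_idx X \<theta> \<alpha> i (lsa_counts X \<theta> \<alpha> K tb \<omega> t i) \<omega>"

definition F_event :: "'a measure \<Rightarrow> (nat \<Rightarrow> nat \<Rightarrow> 'a \<Rightarrow> real) \<Rightarrow> real \<Rightarrow> real \<Rightarrow> nat
    \<Rightarrow> (nat \<Rightarrow> (nat \<Rightarrow> nat) \<Rightarrow> nat set \<Rightarrow> nat) \<Rightarrow> nat \<Rightarrow> real \<Rightarrow> 'a set" where
  "F_event M X \<theta> \<alpha> K tb T C =
     {\<omega> \<in> space M. \<exists>T'. K \<le> T' \<and> T' \<le> T \<and> (\<forall>i<K. xi X \<theta> \<alpha> K tb \<omega> T' i > C)}"

definition Mconst :: "real \<Rightarrow> real" where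
  "Mconst \<alpha> = max (40 / \<alpha> + 1) 40"

text \<open>g_i; the case Delta_i = 0 corresponds to ln(1/0) = +infinity.\<close>
definition gfun :: "real \<Rightarrow> real \<Rightarrow> real \<Rightarrow> real" where
  "gfun \<alpha> \<Delta> x = (if \<Delta> = 0 \<or> x \<le> ln (1 / \<Delta>) then exp (2 * x)
                    else (x - ln (1 / \<Delta>) + \<alpha>) / (\<alpha> * \<Delta>\<^sup>2))"

definition Lam :: "real \<Rightarrow> (nat \<Rightarrow> real) \<Rightarrow> nat \<Rightarrow> nat \<Rightarrow> real" where
  "Lam \<alpha> \<Delta> K T = (THE x. x \<ge> 0 \<and> (\<Sum>i<K. gfun \<alpha> (\<Delta> i) x) = real T / Mconst \<alpha>)"

definition lam :: "real \<Rightarrow> (nat \<Rightarrow> real) \<Rightarrow> nat \<Rightarrow> nat \<Rightarrow> nat \<Rightarrow> real" where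
  "lam \<alpha> \<Delta> K T i = gfun \<alpha> (\<Delta> i) (Lam \<alpha> \<Delta> K T)"

definition Bset :: "real \<Rightarrow> (nat \<Rightarrow> real) \<Rightarrow> nat \<Rightarrow> nat \<Rightarrow> nat set" where
  "Bset \<alpha> \<Delta> K T = {i. i < K \<and> \<Delta> i > 0 \<and> ln (1 / \<Delta> i) < Lam \<alpha> \<Delta> K T}"

definition M_event :: "'a measure \<Rightarrow> (nat \<Rightarrow> nat \<Rightarrow> 'a \<Rightarrow> real) \<Rightarrow> real \<Rightarrow> real
    \<Rightarrow> (nat \<Rightarrow> real) \<Rightarrow> nat \<Rightarrow> nat \<Rightarrow> nat \<Rightarrow> real \<Rightarrow> 'a set" where
  "M_event M X \<theta> \<alpha> \<Delta> K T i \<kappa> =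
     {\<omega> \<in> space M. \<forall>t::nat. 1 \<le> t \<and> real t \<le> lam \<alpha> \<Delta> K T i \<longrightarrow>
        \<bar>emp_gap X \<theta> i t \<omega> - \<Delta> i\<bar>
          \<le> sqrt ((lam \<alpha> \<Delta> K T i * (\<Delta> i)\<^sup>2 / 5 - \<kappa> / 2
                   + ln (lam \<alpha> \<Delta> K T i / real t) / (4 * \<alpha>)) / real t)}"

end

theory Submission
  imports Defs
begin

text \<open>On the event \<open>F\<close> there is a round \<open>T' \<le> T\<close> at which every arm has LSA index above the
  threshold \<open>\<Lambda> - f(\<kappa>)\<close>. If arm \<open>i\<close> is pulled fewer than \<open>\<lambda>\<^sub>i/20\<close> times by round \<open>T\<close>, its count
  \<open>n = T\<^sub>i(T')\<close> satisfies \<open>20 n < \<lambda>\<^sub>i\<close>, and on \<open>\<M>\<^sub>i\<^sub>,\<^sub>\<kappa>\<close> the empirical gap after \<open>n\<close> pulls is close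
  enough to \<open>\<Delta>\<^sub>i\<close> to keep the index of arm \<open>i\<close> below that threshold. Hence the event in the
  numerator lies in the complement of \<open>\<M>\<^sub>i\<^sub>,\<^sub>\<kappa>\<close>; no probabilistic reasoning beyond monotonicity of
  measure is needed, and the inclusion holds for every tie-breaking rule and without the
  hypotheses on \<open>T\<close>, \<open>\<alpha> \<le> 8\<close> and the lower bound on \<open>\<kappa>\<close>.\<close>

lemma seven_ln_20_minus_eight_ln_9_lt_4: "7 * ln (20::real) - 8 * ln 9 < 4"
proof -
  have "(5/4::real) ^ 4 < exp 1"
    using exp_1_gt_powr[of 4] by (simp add: powr_realpow)
  then have "((5/4::real) ^ 4) ^ 4 < exp 1 ^ 4"
    by (intro power_strict_mono) auto
  moreover have "(20::real) ^ 7 / 9 ^ 8 < (5/4) ^ 16"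
    by (simp add: power_divide)
  ultimately have "(20::real) ^ 7 / 9 ^ 8 < exp 4"
    by (simp add: exp_of_nat_mult[symmetric] power_mult[symmetric])
  then have "ln ((20::real) ^ 7 / 9 ^ 8) < ln (exp 4)"
    by (subst ln_less_cancel_iff) auto
  then show ?thesis
    using ln_realpow[of "20::real" 7] ln_realpow[of "9::real" 8] by (simp add: ln_div)
qed

lemma ln_lt_affine_bound:
  assumes "y > (0::real)"
  shows "ln y < 9/20 * y - 1/2 + ln 20 / 8"
proof -
  have "ln (9/20 * y) \<le> 9/20 * y - 1"
    using assms by (intro ln_le_minus_one) auto
  moreover have "ln (9/20 * y) = ln 9 - ln 20 + ln y"
    using assms by (simp add: ln_mult ln_div)
  ultimately show ?thesis
    using seven_ln_20_minus_eight_ln_9_lt_4 by linarith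
qed

lemma power2_le_of_abs_diff_le:
  fixes E \<Delta> w :: real
  assumes "0 \<le> E" and "\<bar>E - \<Delta>\<bar> \<le> w"
  shows "E\<^sup>2 \<le> 3 * \<Delta>\<^sup>2 + 3/2 * w\<^sup>2"
proof -
  have "E\<^sup>2 \<le> (\<Delta> + w)\<^sup>2"
    using assms by (intro power_mono) auto
  also have "\<dots> = 3 * \<Delta>\<^sup>2 + 3/2 * w\<^sup>2 - (2 * \<Delta> - w)\<^sup>2 / 2"
    by (simp add: power2_eq_square field_simps)
  also have "\<dots> \<le> 3 * \<Delta>\<^sup>2 + 3/2 * w\<^sup>2"
    by simp
  finally show ?thesis .
qed

lemma lsa_idx_below_threshold:
  fixes \<alpha> \<Delta> \<Lambda> l E E' \<kappa> :: real and n :: nat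
  assumes \<alpha>: "\<alpha> > 0" and \<Delta>: "\<Delta> > 0" and \<Lambda>: "ln (1 / \<Delta>) < \<Lambda>"
    and l: "l = (\<Lambda> - ln (1 / \<Delta>) + \<alpha>) / (\<alpha> * \<Delta>\<^sup>2)"
    and n: "n \<ge> 1" "real n < l / 20" and E: "E \<ge> 0"
    and dev_n: "\<bar>E - \<Delta>\<bar> \<le> sqrt ((l * \<Delta>\<^sup>2 / 5 - \<kappa> / 2 + ln (l / real n) / (4 * \<alpha>)) / real n)"
    and dev_20n: "\<bar>E' - \<Delta>\<bar>
      \<le> sqrt ((l * \<Delta>\<^sup>2 / 5 - \<kappa> / 2 + ln (l / real (20 * n)) / (4 * \<alpha>)) / real (20 * n))"
  shows "\<alpha> * real n * E\<^sup>2 + ln (real n) / 2 < \<Lambda> - (\<alpha> * \<kappa> + ln \<alpha> + 1/2 - \<alpha>)"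
proof -
  define y where "y = \<Lambda> - ln (1 / \<Delta>) + \<alpha>"
  define R where "R = l * \<Delta>\<^sup>2 / 5 - \<kappa> / 2 + ln (l / real n) / (4 * \<alpha>)"
  define R' where "R' = l * \<Delta>\<^sup>2 / 5 - \<kappa> / 2 + ln (l / real (20 * n)) / (4 * \<alpha>)"
  have "y > \<alpha>" "y > 0"
    using \<Lambda> \<alpha> by (auto simp: y_def)
  have l_y: "l = y / (\<alpha> * \<Delta>\<^sup>2)"
    by (simp add: l y_def)
  then have y_l: "y = \<alpha> * l * \<Delta>\<^sup>2"
    using \<alpha> \<Delta> by simp
  have "l > 0"
    using l_y \<open>y > 0\<close> \<alpha> \<Delta> by simp
  have ln_l: "ln l = ln y - ln \<alpha> - 2 * ln \<Delta>"
    using \<open>y > 0\<close> \<alpha> \<Delta> by (simp add: l_y ln_div ln_mult ln_realpow)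
  have \<alpha>R: "\<alpha> * R = y / 5 - \<alpha> * \<kappa> / 2 + (ln l - ln n) / 4"
    using \<alpha> \<open>l > 0\<close> n(1) by (simp add: R_def y_l ln_div field_simps)
  have \<alpha>R': "\<alpha> * R' = y / 5 - \<alpha> * \<kappa> / 2 + (ln l - ln 20 - ln n) / 4"
    using \<alpha> \<open>l > 0\<close> n(1) by (simp add: R'_def y_l ln_div ln_mult field_simps)
  \<comment> \<open>\<^const>\<open>sqrt\<close> is odd on the reals, so the bound at \<open>20 n\<close> pulls forces its radicand to be
    nonnegative. This is its only use, and it bounds \<open>\<kappa>\<close> from above.\<close>
  have "R' \<ge> 0"
    using order_trans[OF abs_ge_zero dev_20n] n by (simp add: R'_def zero_le_divide_iff)
  have "R \<ge> 0"
    using order_trans[OF abs_ge_zero dev_n] n by (simp add: R_def zero_le_divide_iff)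
  have "E\<^sup>2 \<le> 3 * \<Delta>\<^sup>2 + 3/2 * (sqrt (R / n))\<^sup>2"
    using power2_le_of_abs_diff_le[OF E] dev_n by (simp add: R_def)
  also have "(sqrt (R / n))\<^sup>2 = R / n"
    using \<open>R \<ge> 0\<close> by simp
  finally have "n * E\<^sup>2 \<le> n * (3 * \<Delta>\<^sup>2 + 3/2 * (R / n))"
    using n(1) by (intro mult_left_mono) auto
  also have "\<dots> = 3 * n * \<Delta>\<^sup>2 + 3/2 * R"
    using n(1) by (simp add: field_simps)
  finally have "\<alpha> * (n * E\<^sup>2) \<le> \<alpha> * (3 * n * \<Delta>\<^sup>2 + 3/2 * R)"
    using \<alpha> by (intro mult_left_mono) auto
  then have idx: "\<alpha> * n * E\<^sup>2 \<le> 3 * (\<alpha> * n * \<Delta>\<^sup>2) + 3/2 * (\<alpha> * R)"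
    by (simp add: algebra_simps)
  have "\<alpha> * n * \<Delta>\<^sup>2 < y / 20"
    using n(2) \<alpha> \<Delta> by (simp add: y_l)
  moreover have "\<alpha> * R' \<ge> 0"
    using \<open>R' \<ge> 0\<close> \<alpha> by simp
  moreover have "ln \<alpha> < ln y" "\<Lambda> = y - ln \<Delta> - \<alpha>"
    using \<open>y > \<alpha>\<close> \<alpha> \<Delta> by (auto simp: y_def ln_div)
  ultimately show ?thesis
    using idx \<alpha>R \<alpha>R' ln_l ln_lt_affine_bound[OF \<open>y > 0\<close>] by argo
qed

lemma lsa_counts_Suc_ge: "lsa_counts X \<theta> \<alpha> K tb \<omega> t j \<le> lsa_counts X \<theta> \<alpha> K tb \<omega> (Suc t) j"
  by (auto simp: Let_def)

lemma lsa_counts_mono: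
  "t \<le> t' \<Longrightarrow> lsa_counts X \<theta> \<alpha> K tb \<omega> t j \<le> lsa_counts X \<theta> \<alpha> K tb \<omega> t' j"
  by (rule lift_Suc_mono_le[of "\<lambda>t. lsa_counts X \<theta> \<alpha> K tb \<omega> t j"]) (rule lsa_counts_Suc_ge)

lemma lsa_counts_initial: "t \<le> K \<Longrightarrow> lsa_counts X \<theta> \<alpha> K tb \<omega> t j = (if j < t then 1 else 0)"
  by (induction t) (auto simp: Let_def)

lemma lsa_counts_pos: "K \<le> t \<Longrightarrow> j < K \<Longrightarrow> lsa_counts X \<theta> \<alpha> K tb \<omega> t j \<ge> 1"
  using lsa_counts_mono[of K t] lsa_counts_initial[of K K] by (metis order_refl)

lemma low_count_inter_F_event_subset_not_M_event:
  assumes \<alpha>: "\<alpha> > 0" and i: "i \<in> Bset \<alpha> \<Delta> K T"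
  shows "{\<omega> \<in> space M. real (lsa_counts X \<theta> \<alpha> K tb \<omega> T i) < lam \<alpha> \<Delta> K T i / 20}
           \<inter> F_event M X \<theta> \<alpha> K tb T (Lam \<alpha> \<Delta> K T - (\<alpha> * \<kappa> + ln \<alpha> + 1/2 - \<alpha>))
         \<subseteq> space M - M_event M X \<theta> \<alpha> \<Delta> K T i \<kappa>" (is "?A \<inter> ?F \<subseteq> _ - ?M")
proof
  fix \<omega>
  assume "\<omega> \<in> ?A \<inter> ?F"
  then obtain T' where \<omega>: "\<omega> \<in> space M"
    and low: "real (lsa_counts X \<theta> \<alpha> K tb \<omega> T i) < lam \<alpha> \<Delta> K T i / 20"
    and T': "K \<le> T'" "T' \<le> T"
    and above: "\<forall>j<K. Lam \<alpha> \<Delta> K T - (\<alpha> * \<kappa> + ln \<alpha> + 1/2 - \<alpha>) < xi X \<theta> \<alpha> K tb \<omega> T' j"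
    by (auto simp: F_event_def)
  have "i < K" "\<Delta> i > 0" "ln (1 / \<Delta> i) < Lam \<alpha> \<Delta> K T"
    using i by (auto simp: Bset_def)
  define n where "n = lsa_counts X \<theta> \<alpha> K tb \<omega> T' i"
  define l where "l = lam \<alpha> \<Delta> K T i"
  have "n \<ge> 1"
    using lsa_counts_pos[OF T'(1) \<open>i < K\<close>] by (simp add: n_def)
  have "real n < l / 20"
    using lsa_counts_mono[OF T'(2)] low unfolding n_def l_def
    by (meson of_nat_le_iff order.strict_trans1)
  have l: "l = (Lam \<alpha> \<Delta> K T - ln (1 / \<Delta> i) + \<alpha>) / (\<alpha> * (\<Delta> i)\<^sup>2)"
    using \<open>\<Delta> i > 0\<close> \<open>ln (1 / \<Delta> i) < Lam \<alpha> \<Delta> K T\<close> by (simp add: l_def lam_def gfun_def)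
  have "\<omega> \<notin> ?M"
  proof
    assume "\<omega> \<in> ?M"
    then have dev: "\<bar>emp_gap X \<theta> i t \<omega> - \<Delta> i\<bar>
        \<le> sqrt ((l * (\<Delta> i)\<^sup>2 / 5 - \<kappa> / 2 + ln (l / real t) / (4 * \<alpha>)) / real t)"
      if "1 \<le> t" "real t \<le> l" for t
      using that by (simp add: M_event_def l_def)
    have "\<alpha> * real n * (emp_gap X \<theta> i n \<omega>)\<^sup>2 + ln (real n) / 2
        < Lam \<alpha> \<Delta> K T - (\<alpha> * \<kappa> + ln \<alpha> + 1/2 - \<alpha>)"
      by (intro lsa_idx_below_threshold[OF \<alpha> \<open>\<Delta> i > 0\<close> \<open>ln (1 / \<Delta> i) < Lam \<alpha> \<Delta> K T\<close> l
            \<open>n \<ge> 1\<close> \<open>real n < l / 20\<close> _ dev[of n] dev[of "20 * n"]])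
        (use \<open>n \<ge> 1\<close> \<open>real n < l / 20\<close> in \<open>auto simp: emp_gap_def\<close>)
    with above \<open>i < K\<close> show False
      by (fastforce simp: xi_def lsa_idx_def n_def)
  qed
  with \<omega> show "\<omega> \<in> space M - ?M"
    by simp
qed

lemma M_event_sets:
  assumes "\<forall>s\<ge>1. X i s \<in> borel_measurable M"
  shows "M_event M X \<theta> \<alpha> \<Delta> K T i \<kappa> \<in> sets M"
proof -
  have "(\<lambda>\<omega>. emp_gap X \<theta> i t \<omega>) \<in> borel_measurable M" for t
    using assms unfolding emp_gap_def by (intro borel_measurable_abs borel_measurable_diff
        borel_measurable_divide borel_measurable_sum) auto
  then show ?thesis
    unfolding M_event_def by measurable
qed

theorem corollary1:
  fixes M :: "'a measure" and X :: "nat \<Rightarrow> nat \<Rightarrow> 'a \<Rightarrow> real"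
    and D :: "nat \<Rightarrow> real measure" and K T i :: nat and \<alpha> \<theta> \<kappa> :: real
    and tb :: "nat \<Rightarrow> (nat \<Rightarrow> nat) \<Rightarrow> nat set \<Rightarrow> nat"
  assumes "prob_space M"
    and "K \<ge> 2"
    and "\<forall>j<K. \<forall>s\<ge>1. X j s \<in> borel_measurable M \<and> distr M borel (X j s) = D j"
    and "\<forall>j<K. \<forall>s\<ge>1. \<forall>\<omega>\<in>space M. 0 \<le> X j s \<omega> \<and> X j s \<omega> \<le> 1"
    and "prob_space.indep_vars M (\<lambda>_. borel) (\<lambda>p. X (fst p) (snd p)) ({..<K} \<times> {1..})"
    and "0 < \<theta>" and "\<theta> < 1"
    and "0 < \<alpha>" and "\<alpha> \<le> 8"
    and "real T \<ge> max (40 / \<alpha> + 1) 40 * real K"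
    and "\<forall>t c S. S \<noteq> {} \<longrightarrow> tb t c S \<in> S"
    and "i \<in> Bset \<alpha> (arm_gap D \<theta>) K T"
    and "\<kappa> \<ge> (\<alpha> - ln \<alpha> - 1/2) / \<alpha>"
    and "measure M (F_event M X \<theta> \<alpha> K tb T
            (Lam \<alpha> (arm_gap D \<theta>) K T - (\<alpha> * \<kappa> + ln \<alpha> + 1/2 - \<alpha>))) > 0"
  shows "measure M ({\<omega> \<in> space M. real (lsa_counts X \<theta> \<alpha> K tb \<omega> T i) < lam \<alpha> (arm_gap D \<theta>) K T i / 20}
                     \<inter> F_event M X \<theta> \<alpha> K tb T
                         (Lam \<alpha> (arm_gap D \<theta>) K T - (\<alpha> * \<kappa> + ln \<alpha> + 1/2 - \<alpha>)))
           / measure M (F_event M X \<theta> \<alpha> K tb T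
                         (Lam \<alpha> (arm_gap D \<theta>) K T - (\<alpha> * \<kappa> + ln \<alpha> + 1/2 - \<alpha>)))
         \<le> measure M (space M - M_event M X \<theta> \<alpha> (arm_gap D \<theta>) K T i \<kappa>)
           / measure M (F_event M X \<theta> \<alpha> K tb T
                         (Lam \<alpha> (arm_gap D \<theta>) K T - (\<alpha> * \<kappa> + ln \<alpha> + 1/2 - \<alpha>)))"
proof -
  interpret prob_space M by fact
  let ?F = "F_event M X \<theta> \<alpha> K tb T
              (Lam \<alpha> (arm_gap D \<theta>) K T - (\<alpha> * \<kappa> + ln \<alpha> + 1/2 - \<alpha>))"
  have "i < K"
    using assms(12) by (simp add: Bset_def)
  then have "M_event M X \<theta> \<alpha> (arm_gap D \<theta>) K T i \<kappa> \<in> sets M"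
    using assms(3) by (intro M_event_sets) auto
  then have "measure M ({\<omega> \<in> space M. real (lsa_counts X \<theta> \<alpha> K tb \<omega> T i)
                                        < lam \<alpha> (arm_gap D \<theta>) K T i / 20} \<inter> ?F)
             \<le> measure M (space M - M_event M X \<theta> \<alpha> (arm_gap D \<theta>) K T i \<kappa>)"
    by (intro finite_measure_mono[OF low_count_inter_F_event_subset_not_M_event[OF assms(8,12)]])
      auto
  then show ?thesis
    using assms(14) by (simp add: divide_right_mono)
qed

end
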